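(* Let $E$ be a countable set, $x, y, z \in E$ (not necessarily distinct), and $\sigma$ a random virtual permutation of $E$ whose law is central. Then, almost surely on the event $\{x \sim_\sigma y \sim_\sigma z\}$: $\delta(x,x) = 0$, $\delta(x,y) = -\delta(y,x)$, and $\delta(x,y) + \delta(y,z) = \delta(x,z)$.
   Context: For a set $E$, a virtual permutation is a family $\sigma = (\sigma_I)_{I}$ indexed by finite subsets $I \subset E$, $\sigma_I$ a permutation of $I$, such that for finite $I\subset J$, $\sigma_I(x) = \sigma_J^m(x)$ with $m \geq 1$ minimal such that $\sigma_J^m(x) \in I$. The space of virtual permutations carries the $\sigma$-algebra generated by $\sigma \mapsto \sigma_J$. $x\sim_\sigma y$ iff $x,y$ lie in the same cycle of $\sigma_I$ for some (equivalently every) finite $I \ni x,y$; $\mathcal{C}_\sigma(x)$ is the class of $x$. A law is central if the law of each $\sigma_I$ is conjugation invariant in the symmetric group of $I$. Under a central law, $\lambda(x) \in [0,1]$ denotes the limit (in $L^1$ as $|I|\to\infty$) of $|I \cap \mathcal{C}_\sigma(x)|/|I|$, and $\lambda(x)=\lambda(y)$ a.s. if $x \sim_\sigma y$. For $x \sim_\sigma y$ and finite $I \ni x,y$, $k_I(x,y)$ is the unique integer in $\{0,\dots,|I\cap\mathcal{C}_\sigma(x)|-1\}$ with $\sigma_I^{k_I(x,y)}(x)=y$; $\Delta(x,y)\in[0,1]$ is the limit in $L^1$ of $k_I(x,y)/|I|$ as $|I|\to\infty$ (with $\Delta(x,x)=0$), and $\delta(x,y) \in \mathbb{R}/\lambda(x)\mathbb{Z}$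 is the class of $\Delta(x,y)$ modulo $\lambda(x)$. *)

theory Defs
  imports "HOL-Probability.Probability" "HOL-Combinatorics.Permutations"
begin

text \<open>A virtual permutation of E: a family s I (for finite I \<subseteq> E) of permutations
of I, compatible under the operation of removing elements from cycles.
Values of s at infinite or non-subsets are irrelevant.\<close>
definition virtual_perm :: "'a set \<Rightarrow> ('a set \<Rightarrow> 'a \<Rightarrow> 'a) \<Rightarrow> bool" where
  "virtual_perm E s \<longleftrightarrow>
     (\<forall>I. finite I \<and> I \<subseteq> E \<longrightarrow> s I permutes I) \<and>
     (\<forall>I J. finite J \<and> J \<subseteq> E \<and> I \<subseteq> J \<longrightarrow>
        (\<forall>x\<in>I. s I x = (s J ^^ (LEAST m. m \<ge> 1 \<and> (s J ^^ m) x \<in> I)) x))"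

definition vrel :: "'a set \<Rightarrow> ('a set \<Rightarrow> 'a \<Rightarrow> 'a) \<Rightarrow> 'a \<Rightarrow> 'a \<Rightarrow> bool" where
  "vrel E s x y \<longleftrightarrow>
     (\<exists>I. finite I \<and> I \<subseteq> E \<and> x \<in> I \<and> y \<in> I \<and> (\<exists>n. (s I ^^ n) x = y))"

definition vclass :: "'a set \<Rightarrow> ('a set \<Rightarrow> 'a \<Rightarrow> 'a) \<Rightarrow> 'a \<Rightarrow> 'a set" where
  "vclass E s x = {y \<in> E. vrel E s x y}"

text \<open>k_I(x,y): the unique k in {0..|I \<inter> C(x)|-1} with (s I)^k x = y (meaningful when x \<sim> y).\<close>
definition kI :: "'a set \<Rightarrow> ('a set \<Rightarrow> 'a \<Rightarrow> 'a) \<Rightarrow> 'a set \<Rightarrow> 'a \<Rightarrow> 'a \<Rightarrow> nat" where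
  "kI E s I x y = (THE k. k < card (I \<inter> vclass E s x) \<and> (s I ^^ k) x = y)"

definition random_virtual_perm :: "'w measure \<Rightarrow> 'a set \<Rightarrow> ('w \<Rightarrow> 'a set \<Rightarrow> 'a \<Rightarrow> 'a) \<Rightarrow> bool" where
  "random_virtual_perm M E \<sigma> \<longleftrightarrow>
     (\<forall>\<omega>\<in>space M. virtual_perm E (\<sigma> \<omega>)) \<and>
     (\<forall>J. finite J \<and> J \<subseteq> E \<longrightarrow> (\<lambda>\<omega>. \<sigma> \<omega> J) \<in> measurable M (count_space UNIV))"

definition central_law :: "'w measure \<Rightarrow> 'a set \<Rightarrow> ('w \<Rightarrow> 'a set \<Rightarrow> 'a \<Rightarrow> 'a) \<Rightarrow> bool" where
  "central_law M E \<sigma> \<longleftrightarrow>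
     (\<forall>J \<tau>. finite J \<and> J \<subseteq> E \<and> \<tau> permutes J \<longrightarrow>
        distr M (count_space UNIV) (\<lambda>\<omega>. \<tau> \<circ> \<sigma> \<omega> J \<circ> inv \<tau>)
          = distr M (count_space UNIV) (\<lambda>\<omega>. \<sigma> \<omega> J))"

definition is_lambda :: "'w measure \<Rightarrow> 'a set \<Rightarrow> ('w \<Rightarrow> 'a set \<Rightarrow> 'a \<Rightarrow> 'a) \<Rightarrow> 'a \<Rightarrow> ('w \<Rightarrow> real) \<Rightarrow> bool" where
  "is_lambda M E \<sigma> x L \<longleftrightarrow> L \<in> borel_measurable M \<and>
     (\<forall>\<epsilon>>0. \<exists>N. \<forall>I. finite I \<and> I \<subseteq> E \<and> card I \<ge> N \<longrightarrow>
        (\<integral>\<^sup>+\<omega>. ennreal \<bar>real (card (I \<inter> vclass E (\<sigma> \<omega>) x)) / real (card I) - L \<omega>\<bar> \<partial>M)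
          < ennreal \<epsilon>)"

definition is_Delta :: "'w measure \<Rightarrow> 'a set \<Rightarrow> ('w \<Rightarrow> 'a set \<Rightarrow> 'a \<Rightarrow> 'a) \<Rightarrow> 'a \<Rightarrow> 'a \<Rightarrow> ('w \<Rightarrow> real) \<Rightarrow> bool" where
  "is_Delta M E \<sigma> x y D \<longleftrightarrow> D \<in> borel_measurable M \<and>
     (\<forall>\<epsilon>>0. \<exists>N. \<forall>I. finite I \<and> I \<subseteq> E \<and> x \<in> I \<and> y \<in> I \<and> card I \<ge> N \<longrightarrow>
        (\<integral>\<^sup>+\<omega>. ennreal (indicator {\<omega>. vrel E (\<sigma> \<omega>) x y} \<omega> *
            \<bar>real (kI E (\<sigma> \<omega>) I x y) / real (card I) - D \<omega>\<bar>) \<partial>M) < ennreal \<epsilon>)"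

definition cong_real :: "real \<Rightarrow> real \<Rightarrow> real \<Rightarrow> bool" where
  "cong_real l a b \<longleftrightarrow> (\<exists>k::int. a - b = of_int k * l)"

end

theory Submission
  imports Defs "HOL-Combinatorics.Orbits"
begin

text \<open>For finite I containing x, y, z, the cycle of x under the permutation on I is the trace on I of
  its cycle under the virtual permutation. Hence the indices k_I are additive modulo the class size
  |I \<inter> C(x)|: the defect k_I(x,y) + k_I(y,z) - k_I(x,z) is 0 or |I \<inter> C(x)|, and k_I(x,x) = 0.
  Dividing by |I| and passing to the limit along a sequence of sets on which the convergences in
  mean of |I \<inter> C(x)|/|I| and k_I/|I| hold almost surely (errors chosen summable), the defect
  Delta(x,y) + Delta(y,z) - Delta(x,z) is 0 or lambda(x); the case z = x gives antisymmetry.\<close>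

lemma permutation_funpow_eq_iff_mod:
  assumes "permutation f"
  shows "(f ^^ i) a = (f ^^ j) a \<longleftrightarrow> i mod card (orbit f a) = j mod card (orbit f a)"
proof -
  have a: "a \<in> orbit f a"
    using assms by (rule permutation_self_in_orbit)
  define q where "q = funpow_dist1 f a a"
  have period: "(f ^^ q) a = a"
    unfolding q_def using a by (rule funpow_dist1_prop)
  have card: "card (orbit f a) = q"
    unfolding q_def orbit_conv_funpow_dist1[OF a]
    using inj_on_funpow_dist1[OF a] by (simp add: card_image)
  have "(f ^^ (i mod q)) a = (f ^^ (j mod q)) a \<longleftrightarrow> i mod q = j mod q"
    using inj_on_funpow_dist1[OF a] by (auto simp: q_def inj_on_def)
  then show ?thesis
    using funpow_mod_eq[OF period] card by metis
qed

lemma permutation_orbit_eq: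
  assumes "permutation f" "b \<in> orbit f a"
  shows "orbit f b = orbit f a"
  using assms by (metis cyclic_on_orbit' orbit_cyclic_eq3)

lemma virtual_perm_permutes:
  "virtual_perm E s \<Longrightarrow> finite I \<Longrightarrow> I \<subseteq> E \<Longrightarrow> s I permutes I"
  unfolding virtual_perm_def by blast

lemma virtual_perm_permutation:
  "virtual_perm E s \<Longrightarrow> finite I \<Longrightarrow> I \<subseteq> E \<Longrightarrow> permutation (s I)"
  using permutation_permutes virtual_perm_permutes by blast

lemma virtual_perm_first_return:
  assumes "virtual_perm E s" "finite J" "J \<subseteq> E" "I \<subseteq> J" "b \<in> I"
  shows "s I b = (s J ^^ (LEAST m. m \<ge> 1 \<and> (s J ^^ m) b \<in> I)) b"
  using assms unfolding virtual_perm_def by blast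

lemma virtual_perm_funpow_lift:
  assumes vp: "virtual_perm E s" and J: "finite J" "J \<subseteq> E" "I \<subseteq> J" and a: "a \<in> I"
  shows "\<exists>m. (s I ^^ n) a = (s J ^^ m) a"
proof (induction n)
  case 0
  show ?case by (metis funpow_0)
next
  case (Suc n)
  then obtain m where m: "(s I ^^ n) a = (s J ^^ m) a" by blast
  have "s I permutes I"
    using J by (intro virtual_perm_permutes[OF vp]) (auto intro: finite_subset)
  then have "(s I ^^ n) a \<in> I"
    using a by (induction n) (auto simp: permutes_in_image)
  then obtain L where "s I ((s I ^^ n) a) = (s J ^^ L) ((s I ^^ n) a)"
    using virtual_perm_first_return[OF vp J] by blast
  then have "(s I ^^ Suc n) a = (s J ^^ (L + m)) a"
    using m by (simp add: funpow_add)
  then show ?case by blast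
qed

text \<open>A path of the permutation on J between points of I is a concatenation of first returns
  to I, each of which is one step of the permutation on I.\<close>
lemma virtual_perm_funpow_restrict:
  assumes vp: "virtual_perm E s" and J: "finite J" "J \<subseteq> E" "I \<subseteq> J"
  shows "a \<in> I \<Longrightarrow> b \<in> I \<Longrightarrow> (s J ^^ n) a = b \<Longrightarrow> \<exists>k. (s I ^^ k) a = b"
proof (induction n arbitrary: a rule: less_induct)
  case (less n a)
  show ?case
  proof (cases "n = 0")
    case True
    then show ?thesis using less.prems by (metis funpow_0)
  next
    case False
    let ?P = "\<lambda>m. m \<ge> 1 \<and> (s J ^^ m) a \<in> I"
    define L where "L = (LEAST m. ?P m)"
    have "?P n" using False less.prems by simp
    then have L: "?P L" "L \<le> n"
      unfolding L_def by (rule LeastI, rule Least_le)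
    have step: "s I a = (s J ^^ L) a"
      unfolding L_def using virtual_perm_first_return[OF vp J less.prems(1)] .
    have "(s J ^^ (n - L)) (s I a) = (s J ^^ (n - L + L)) a"
      unfolding step funpow_add by simp
    then have "(s J ^^ (n - L)) (s I a) = b"
      using L less.prems(3) by simp
    moreover have "s I a \<in> I"
      using step L by simp
    ultimately obtain k where "(s I ^^ k) (s I a) = b"
      using less.IH[of "n - L"] L False less.prems(2) by force
    then have "(s I ^^ Suc k) a = b"
      by (simp only: funpow_Suc_right o_apply)
    then show ?thesis by blast
  qed
qed

lemma virtual_perm_orbit_restrict:
  assumes vp: "virtual_perm E s" and J: "finite J" "J \<subseteq> E" "I \<subseteq> J" and a: "a \<in> I"
  shows "orbit (s I) a = orbit (s J) a \<inter> I"
proof -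
  have I: "finite I" "I \<subseteq> E"
    using J by (auto intro: finite_subset)
  have orbit_I: "orbit (s I) a = {(s I ^^ n) a | n. True}"
    by (rule orbit_altdef_permutation[OF virtual_perm_permutation[OF vp I]])
  have orbit_J: "orbit (s J) a = {(s J ^^ n) a | n. True}"
    by (rule orbit_altdef_permutation[OF virtual_perm_permutation[OF vp J(1,2)]])
  show ?thesis
  proof (intro equalityI subsetI)
    fix b assume b: "b \<in> orbit (s I) a"
    then have "b \<in> I"
      using permutes_orbit_subset[OF virtual_perm_permutes[OF vp I] a] by blast
    moreover obtain n where "b = (s I ^^ n) a"
      using b orbit_I by blast
    moreover obtain m where "(s I ^^ n) a = (s J ^^ m) a"
      using virtual_perm_funpow_lift[OF vp J a] by blast
    ultimately show "b \<in> orbit (s J) a \<inter> I"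
      using orbit_J by blast
  next
    fix b assume b: "b \<in> orbit (s J) a \<inter> I"
    then obtain n where "(s J ^^ n) a = b"
      using orbit_J by auto
    then obtain k where "(s I ^^ k) a = b"
      using virtual_perm_funpow_restrict[OF vp J a] b by blast
    then show "b \<in> orbit (s I) a"
      using orbit_I by blast
  qed
qed

lemma vrel_iff_orbit:
  assumes vp: "virtual_perm E s" and I: "finite I" "I \<subseteq> E" and ab: "a \<in> I" "b \<in> I"
  shows "vrel E s a b \<longleftrightarrow> b \<in> orbit (s I) a"
proof
  assume "vrel E s a b"
  then obtain I' where I': "finite I'" "I' \<subseteq> E" "a \<in> I'" "b \<in> I'" "b \<in> orbit (s I') a"
    unfolding vrel_def orbit_altdef_permutation[OF virtual_perm_permutation[OF vp]] by blast
  have "b \<in> orbit (s (I \<union> I')) a"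
    using I' I virtual_perm_orbit_restrict[OF vp, of "I \<union> I'" I'] by auto
  then show "b \<in> orbit (s I) a"
    using I I' ab virtual_perm_orbit_restrict[OF vp, of "I \<union> I'" I] by auto
next
  assume "b \<in> orbit (s I) a"
  then show "vrel E s a b"
    unfolding vrel_def orbit_altdef_permutation[OF virtual_perm_permutation[OF vp I]]
    using I ab by blast
qed

lemma vclass_Int_eq_orbit:
  assumes vp: "virtual_perm E s" and I: "finite I" "I \<subseteq> E" and a: "a \<in> I"
  shows "I \<inter> vclass E s a = orbit (s I) a"
  using vrel_iff_orbit[OF assms] permutes_orbit_subset[OF virtual_perm_permutes[OF vp I] a] I
  unfolding vclass_def by auto

lemma vrel_refl: "a \<in> E \<Longrightarrow> vrel E s a a"
  unfolding vrel_def by (intro exI[of _ "{a}"]) (auto intro: exI[of _ 0])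

lemma vrelE:
  assumes "vrel E s a b"
  obtains I where "finite I" "I \<subseteq> E" "a \<in> I" "b \<in> I"
  using assms unfolding vrel_def by blast

lemma vrel_sym:
  assumes vp: "virtual_perm E s" and ab: "vrel E s a b"
  shows "vrel E s b a"
proof -
  obtain I where I: "finite I" "I \<subseteq> E" "a \<in> I" "b \<in> I"
    using ab by (rule vrelE)
  have perm: "permutation (s I)"
    using virtual_perm_permutation[OF vp I(1,2)] .
  have "orbit (s I) b = orbit (s I) a"
    using permutation_orbit_eq[OF perm] vrel_iff_orbit[OF vp I] ab by blast
  then show ?thesis
    using vrel_iff_orbit[OF vp I(1,2,4,3)] permutation_self_in_orbit[OF perm] by blast
qed

lemma vrel_trans:
  assumes vp: "virtual_perm E s" and "vrel E s a b" "vrel E s b c"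
  shows "vrel E s a c"
proof -
  obtain I1 where I1: "finite I1" "I1 \<subseteq> E" "a \<in> I1" "b \<in> I1"
    using assms(2) by (rule vrelE)
  obtain I2 where I2: "finite I2" "I2 \<subseteq> E" "b \<in> I2" "c \<in> I2"
    using assms(3) by (rule vrelE)
  let ?I = "I1 \<union> I2"
  have I: "finite ?I" "?I \<subseteq> E" "a \<in> ?I" "b \<in> ?I" "c \<in> ?I"
    using I1 I2 by auto
  have "b \<in> orbit (s ?I) a" "c \<in> orbit (s ?I) b"
    using assms(2,3) vrel_iff_orbit[OF vp I(1,2)] I by blast+
  then have "c \<in> orbit (s ?I) a"
    using permutation_orbit_eq[OF virtual_perm_permutation[OF vp I(1,2)]] by blast
  then show ?thesis
    using vrel_iff_orbit[OF vp I(1,2,3,5)] by blast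
qed

lemma vrel_class_Int_eq:
  assumes vp: "virtual_perm E s" and I: "finite I" "I \<subseteq> E" "a \<in> I" "b \<in> I"
    and ab: "vrel E s a b"
  shows "I \<inter> vclass E s b = I \<inter> vclass E s a"
  using permutation_orbit_eq[OF virtual_perm_permutation[OF vp I(1,2)]] vrel_iff_orbit[OF vp I] ab
  by (simp add: vclass_Int_eq_orbit[OF vp I(1,2)] I)

lemma card_vclass_Int_pos:
  assumes vp: "virtual_perm E s" and I: "finite I" "I \<subseteq> E" "a \<in> I"
  shows "0 < card (I \<inter> vclass E s a)"
proof -
  have "a \<in> orbit (s I) a"
    using permutation_self_in_orbit[OF virtual_perm_permutation[OF vp I(1,2)]] .
  then show ?thesis
    unfolding vclass_Int_eq_orbit[OF vp I] using finite_orbit by (auto simp: card_gt_0_iff)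
qed

lemma kI_eq_mod:
  assumes vp: "virtual_perm E s" and I: "finite I" "I \<subseteq> E" "a \<in> I"
    and n: "(s I ^^ n) a = b"
  shows "kI E s I a b = n mod card (I \<inter> vclass E s a)"
proof -
  let ?q = "card (orbit (s I) a)"
  have perm: "permutation (s I)"
    using virtual_perm_permutation[OF vp I(1,2)] .
  have q: "0 < ?q"
    using card_vclass_Int_pos[OF vp I] vclass_Int_eq_orbit[OF vp I] by simp
  have "(THE k. k < ?q \<and> (s I ^^ k) a = b) = n mod ?q"
  proof (rule the_equality)
    show "n mod ?q < ?q \<and> (s I ^^ (n mod ?q)) a = b"
      using q n permutation_funpow_eq_iff_mod[OF perm, of "n mod ?q" a n] by simp
  next
    fix k assume "k < ?q \<and> (s I ^^ k) a = b"
    then show "k = n mod ?q"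
      using n permutation_funpow_eq_iff_mod[OF perm, of k a n] by simp
  qed
  then show ?thesis
    unfolding kI_def vclass_Int_eq_orbit[OF vp I] .
qed

lemma vrel_funpowE:
  assumes vp: "virtual_perm E s" and I: "finite I" "I \<subseteq> E" "a \<in> I" "b \<in> I"
    and ab: "vrel E s a b"
  obtains n where "(s I ^^ n) a = b"
  using ab vrel_iff_orbit[OF vp I] orbit_altdef_permutation[OF virtual_perm_permutation[OF vp I(1,2)]]
  by auto

lemma kI_less_card:
  assumes vp: "virtual_perm E s" and I: "finite I" "I \<subseteq> E" "a \<in> I" "b \<in> I"
    and ab: "vrel E s a b"
  shows "kI E s I a b < card (I \<inter> vclass E s a)"
proof -
  obtain n where "(s I ^^ n) a = b"
    using vrel_funpowE[OF assms] .
  then show ?thesis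
    using kI_eq_mod[OF vp I(1-3)] card_vclass_Int_pos[OF vp I(1-3)] by auto
qed

lemma kI_add_mod:
  assumes vp: "virtual_perm E s" and I: "finite I" "I \<subseteq> E" "x \<in> I" "y \<in> I" "z \<in> I"
    and xy: "vrel E s x y" and yz: "vrel E s y z"
  shows "kI E s I x z = (kI E s I x y + kI E s I y z) mod card (I \<inter> vclass E s x)"
proof -
  obtain m where m: "(s I ^^ m) x = y"
    using vrel_funpowE[OF vp I(1-4) xy] .
  obtain n where n: "(s I ^^ n) y = z"
    using vrel_funpowE[OF vp I(1,2,4,5) yz] .
  have "(s I ^^ (n + m)) x = z"
    using m n by (simp add: funpow_add)
  then have "kI E s I x z = (n + m) mod card (I \<inter> vclass E s x)"
    by (rule kI_eq_mod[OF vp I(1-3)])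
  then show ?thesis
    using kI_eq_mod[OF vp I(1-3) m] kI_eq_mod[OF vp I(1,2,4) n] vrel_class_Int_eq[OF vp I(1-4) xy]
    by (simp add: mod_add_eq add.commute)
qed

lemma add_mod_cases:
  fixes a b c q :: nat
  assumes "a < q" "b < q" "(a + b) mod q = c"
  shows "a + b = c \<or> a + b = c + q"
proof (cases "a + b < q")
  case False
  then have "(a + b) mod q = a + b - q"
    using assms(1,2) by (simp add: le_mod_geq)
  then show ?thesis using assms(3) False by simp
qed (use assms in simp)

lemma kI_add_cases:
  assumes vp: "virtual_perm E s" and I: "finite I" "I \<subseteq> E" "x \<in> I" "y \<in> I" "z \<in> I"
    and xy: "vrel E s x y" and yz: "vrel E s y z"
  shows "kI E s I x y + kI E s I y z = kI E s I x z \<or>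
    kI E s I x y + kI E s I y z = kI E s I x z + card (I \<inter> vclass E s x)"
proof (rule add_mod_cases)
  show "kI E s I x y < card (I \<inter> vclass E s x)"
    using kI_less_card[OF vp I(1-4) xy] .
  show "kI E s I y z < card (I \<inter> vclass E s x)"
    using kI_less_card[OF vp I(1,2,4,5) yz] vrel_class_Int_eq[OF vp I(1-4) xy] by simp
  show "(kI E s I x y + kI E s I y z) mod card (I \<inter> vclass E s x) = kI E s I x z"
    using kI_add_mod[OF vp I xy yz] by simp
qed

lemma tendsto_zero_or_limit:
  fixes s a :: "nat \<Rightarrow> real"
  assumes "s \<longlonglongrightarrow> S" "a \<longlonglongrightarrow> L" "\<And>k. s k = 0 \<or> s k = a k"
  shows "S = 0 \<or> S = L"
proof -
  have "(\<lambda>k. s k * (s k - a k)) \<longlonglongrightarrow> S * (S - L)"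
    using assms(1,2) by (intro tendsto_intros)
  moreover have "(\<lambda>k. s k * (s k - a k)) = (\<lambda>k. 0)"
    using assms(3) by (auto intro!: ext)
  ultimately have "S * (S - L) = 0"
    using LIMSEQ_unique tendsto_const by metis
  then show ?thesis by auto
qed

definition class_fraction :: "'a set \<Rightarrow> ('a set \<Rightarrow> 'a \<Rightarrow> 'a) \<Rightarrow> 'a set \<Rightarrow> 'a \<Rightarrow> real" where
  "class_fraction E s I a = real (card (I \<inter> vclass E s a)) / real (card I)"

definition index_fraction :: "'a set \<Rightarrow> ('a set \<Rightarrow> 'a \<Rightarrow> 'a) \<Rightarrow> 'a set \<Rightarrow> 'a \<Rightarrow> 'a \<Rightarrow> real" where
  "index_fraction E s I a b = real (kI E s I a b) / real (card I)"

lemma cong_real_if_diff_zero_or: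
  "a - b = 0 \<or> a - b = l \<Longrightarrow> cong_real l a b"
  unfolding cong_real_def by (metis mult_zero_left mult_1 of_int_0 of_int_1)

text \<open>On each finite set the indices satisfy the cocycle identity up to one multiple of the
  class size; after division by the size of the set the defect is 0 or the class fraction,
  hence in the limit it is 0 or l.\<close>
lemma virtual_perm_Delta_cocycle:
  fixes Is :: "nat \<Rightarrow> 'a set" and D :: "'a \<Rightarrow> 'a \<Rightarrow> real"
  assumes vp: "virtual_perm E s"
    and Is: "\<And>k. finite (Is k)" "\<And>k. Is k \<subseteq> E" "\<And>k. {x, y, z} \<subseteq> Is k"
    and lam: "(\<lambda>k. class_fraction E s (Is k) x) \<longlonglongrightarrow> l"
    and Delta: "\<And>a b. a \<in> {x, y, z} \<Longrightarrow> b \<in> {x, y, z} \<Longrightarrow> vrel E s a b \<Longrightarrow>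
        (\<lambda>k. index_fraction E s (Is k) a b) \<longlonglongrightarrow> D a b"
    and xy: "vrel E s x y" and yz: "vrel E s y z"
  shows "cong_real l (D x x) 0 \<and> cong_real l (D x y) (- D y x) \<and>
    cong_real l (D x y + D y z) (D x z)"
proof -
  have xyz: "x \<in> Is k" "y \<in> Is k" "z \<in> Is k" for k
    using Is(3) by auto
  have "(\<lambda>k. index_fraction E s (Is k) x x) \<longlonglongrightarrow> D x x"
    using Delta[of x x] vrel_refl[of x E s] Is(2)[of 0] xyz(1)[of 0] by blast
  moreover have "(\<lambda>k. index_fraction E s (Is k) x x) = (\<lambda>k. 0)"
    using kI_eq_mod[OF vp Is(1,2) xyz(1), of 0] by (simp add: index_fraction_def)
  ultimately have Dxx: "D x x = 0"
    using LIMSEQ_unique tendsto_const by metis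
  have cocycle: "D x y + D y c - D x c = 0 \<or> D x y + D y c - D x c = l"
    if c: "c \<in> {x, y, z}" and yc: "vrel E s y c" for c
  proof (rule tendsto_zero_or_limit[OF _ lam])
    have "vrel E s x c"
      using vrel_trans[OF vp xy yc] .
    then show "(\<lambda>k. index_fraction E s (Is k) x y + index_fraction E s (Is k) y c -
        index_fraction E s (Is k) x c) \<longlonglongrightarrow> D x y + D y c - D x c"
      using xy yc c by (intro tendsto_intros Delta) auto
    fix k
    have "c \<in> Is k"
      using c xyz by auto
    then have "kI E s (Is k) x y + kI E s (Is k) y c = kI E s (Is k) x c \<or>
        kI E s (Is k) x y + kI E s (Is k) y c = kI E s (Is k) x c + card (Is k \<inter> vclass E s x)"
      by (rule kI_add_cases[OF vp Is(1,2) xyz(1,2) _ xy yc])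
    then have "real (kI E s (Is k) x y) + real (kI E s (Is k) y c) = real (kI E s (Is k) x c) \<or>
        real (kI E s (Is k) x y) + real (kI E s (Is k) y c) =
          real (kI E s (Is k) x c) + real (card (Is k \<inter> vclass E s x))"
      by (metis of_nat_add)
    then show "index_fraction E s (Is k) x y + index_fraction E s (Is k) y c -
        index_fraction E s (Is k) x c = 0 \<or>
      index_fraction E s (Is k) x y + index_fraction E s (Is k) y c -
        index_fraction E s (Is k) x c = class_fraction E s (Is k) x"
      unfolding index_fraction_def class_fraction_def
      by (auto simp: diff_divide_distrib[symmetric] add_divide_distrib[symmetric])
  qed
  have "cong_real l (D x y) (- D y x)"
    using cocycle[of x] vrel_sym[OF vp xy] Dxx by (intro cong_real_if_diff_zero_or) auto
  moreover have "cong_real l (D x y + D y z) (D x z)"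
    using cocycle[of z] yz by (intro cong_real_if_diff_zero_or) auto
  ultimately show ?thesis
    using Dxx cong_real_if_diff_zero_or[of "D x x" 0 l] by simp
qed

definition large_finite_subsets :: "'a set \<Rightarrow> 'a set \<Rightarrow> 'a set filter" where
  "large_finite_subsets E F = (INF N. principal {I. finite I \<and> F \<subseteq> I \<and> I \<subseteq> E \<and> N \<le> card I})"

lemma eventually_large_finite_subsets:
  "eventually P (large_finite_subsets E F) \<longleftrightarrow>
    (\<exists>N. \<forall>I. finite I \<and> F \<subseteq> I \<and> I \<subseteq> E \<and> N \<le> card I \<longrightarrow> P I)"
  unfolding large_finite_subsets_def
proof (subst eventually_INF_base)
  fix a b :: nat
  show "\<exists>N\<in>UNIV. principal {I. finite I \<and> F \<subseteq> I \<and> I \<subseteq> E \<and> N \<le> card I} \<le>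
      inf (principal {I. finite I \<and> F \<subseteq> I \<and> I \<subseteq> E \<and> a \<le> card I})
        (principal {I. finite I \<and> F \<subseteq> I \<and> I \<subseteq> E \<and> b \<le> card I})"
    by (intro bexI[of _ "max a b"]) auto
qed (auto simp: eventually_principal)

lemma large_finite_subsets_neq_bot:
  assumes E: "infinite E" and F: "finite F" "F \<subseteq> E"
  shows "large_finite_subsets E F \<noteq> bot"
proof
  assume "large_finite_subsets E F = bot"
  then obtain N where N: "\<And>I. finite I \<Longrightarrow> F \<subseteq> I \<Longrightarrow> I \<subseteq> E \<Longrightarrow> N \<le> card I \<Longrightarrow> False"
    using eventually_large_finite_subsets[of "\<lambda>_. False" E F] by auto
  obtain B where B: "finite B" "card B = N" "B \<subseteq> E"
    using infinite_arbitrarily_large[OF E] by blast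
  have "N \<le> card (B \<union> F)"
    using B F by (metis card_mono finite_UnI sup_ge1)
  then show False
    using N[of "B \<union> F"] B F by auto
qed

lemma AE_tendsto_zero_if_summable_nn_integral:
  fixes f :: "nat \<Rightarrow> 'w \<Rightarrow> real"
  assumes meas: "\<And>k. f k \<in> borel_measurable M" and nonneg: "\<And>k \<omega>. 0 \<le> f k \<omega>"
    and bound: "\<And>k. (\<integral>\<^sup>+\<omega>. ennreal (f k \<omega>) \<partial>M) \<le> ennreal (c k)"
    and c: "\<And>k. 0 \<le> c k" "summable c"
  shows "AE \<omega> in M. (\<lambda>k. f k \<omega>) \<longlonglongrightarrow> 0"
proof -
  have sum_meas: "(\<lambda>\<omega>. \<Sum>k. ennreal (f k \<omega>)) \<in> borel_measurable M"
    using meas by measurable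
  have "(\<integral>\<^sup>+\<omega>. (\<Sum>k. ennreal (f k \<omega>)) \<partial>M) = (\<Sum>k. \<integral>\<^sup>+\<omega>. ennreal (f k \<omega>) \<partial>M)"
    by (rule nn_integral_suminf) (use meas in measurable)
  also have "\<dots> \<le> (\<Sum>k. ennreal (c k))"
    by (intro suminf_le bound) auto
  also have "\<dots> = ennreal (\<Sum>k. c k)"
    using c by (rule suminf_ennreal2)
  finally have "(\<integral>\<^sup>+\<omega>. (\<Sum>k. ennreal (f k \<omega>)) \<partial>M) \<noteq> \<infinity>"
    by (metis ennreal_neq_top infinity_ennreal_def neq_top_trans)
  then have "AE \<omega> in M. (\<Sum>k. ennreal (f k \<omega>)) \<noteq> \<infinity>"
    by (rule nn_integral_noteq_infinite[OF sum_meas])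
  then show ?thesis
  proof eventually_elim
    case (elim \<omega>)
    then have "summable (\<lambda>k. f k \<omega>)"
      using nonneg by (intro summable_suminf_not_top) auto
    then show ?case
      by (rule summable_LIMSEQ_zero)
  qed
qed

text \<open>Convergence in mean along a filter yields almost sure convergence along a sequence:
  choose the k-th term with all mean errors below 2^-k.\<close>
lemma AE_tendsto_zero_along_sequence:
  fixes G :: "('i \<Rightarrow> 'w \<Rightarrow> real) set" and F :: "'i filter"
  assumes F: "F \<noteq> bot" and G: "finite G" and P: "eventually P F"
    and meas: "\<And>g. g \<in> G \<Longrightarrow> eventually (\<lambda>i. g i \<in> borel_measurable M) F"
    and nonneg: "\<And>g i \<omega>. g \<in> G \<Longrightarrow> 0 \<le> g i \<omega>"
    and mean: "\<And>g \<epsilon>. g \<in> G \<Longrightarrow> 0 < \<epsilon> \<Longrightarrow>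
      eventually (\<lambda>i. (\<integral>\<^sup>+\<omega>. ennreal (g i \<omega>) \<partial>M) < ennreal \<epsilon>) F"
  obtains seq where "\<And>k. P (seq k)" "AE \<omega> in M. \<forall>g\<in>G. (\<lambda>k. g (seq k) \<omega>) \<longlonglongrightarrow> 0"
proof -
  define good where "good k i \<longleftrightarrow> P i \<and> (\<forall>g\<in>G. g i \<in> borel_measurable M \<and>
      (\<integral>\<^sup>+\<omega>. ennreal (g i \<omega>) \<partial>M) < ennreal ((1/2) ^ k))" for k i
  have "eventually (good k) F" for k
    unfolding good_def using P meas mean
    by (intro eventually_conj eventually_ball_finite[OF G] ballI) (auto intro: eventually_conj)
  then have "\<forall>k. \<exists>i. good k i"
    using eventually_happens'[OF F] by blast
  then obtain seq where seq: "\<And>k. good k (seq k)"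
    by metis
  show thesis
  proof (rule that)
    show "P (seq k)" for k
      using seq by (simp add: good_def)
    show "AE \<omega> in M. \<forall>g\<in>G. (\<lambda>k. g (seq k) \<omega>) \<longlonglongrightarrow> 0"
    proof (rule AE_finite_allI[OF G])
      fix g assume g: "g \<in> G"
      show "AE \<omega> in M. (\<lambda>k. g (seq k) \<omega>) \<longlonglongrightarrow> 0"
      proof (rule AE_tendsto_zero_if_summable_nn_integral)
        show "g (seq k) \<in> borel_measurable M" for k
          using seq g by (simp add: good_def)
        show "(\<integral>\<^sup>+\<omega>. ennreal (g (seq k) \<omega>) \<partial>M) \<le> ennreal ((1/2) ^ k)" for k
          using seq g by (simp add: good_def less_imp_le)
      qed (use g nonneg in auto)
    qed
  qed
qed

lemma random_virtual_perm_virtual_perm: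
  "random_virtual_perm M E \<sigma> \<Longrightarrow> \<omega> \<in> space M \<Longrightarrow> virtual_perm E (\<sigma> \<omega>)"
  unfolding random_virtual_perm_def by blast

lemma random_virtual_perm_measurable:
  assumes "random_virtual_perm M E \<sigma>" "finite I" "I \<subseteq> E"
    and "\<And>\<omega>. \<omega> \<in> space M \<Longrightarrow> f \<omega> = h (\<sigma> \<omega> I)"
  shows "f \<in> measurable M (count_space UNIV)"
proof -
  have "(\<lambda>\<omega>. \<sigma> \<omega> I) \<in> measurable M (count_space UNIV)"
    using assms(1-3) unfolding random_virtual_perm_def by blast
  then have "(\<lambda>\<omega>. h (\<sigma> \<omega> I)) \<in> measurable M (count_space UNIV)"
    by (rule measurable_compose) simp
  then show ?thesis
    using measurable_cong[of M f, OF assms(4)] by blast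
qed

lemma borel_measurable_indicator_vrel:
  assumes rvp: "random_virtual_perm M E \<sigma>" and I: "finite I" "I \<subseteq> E" "a \<in> I" "b \<in> I"
  shows "(\<lambda>\<omega>. indicator {\<omega>. vrel E (\<sigma> \<omega>) a b} \<omega> :: real) \<in> borel_measurable M"
proof -
  have "(\<lambda>\<omega>. vrel E (\<sigma> \<omega>) a b) \<in> measurable M (count_space UNIV)"
    by (rule random_virtual_perm_measurable[OF rvp I(1,2), where h = "\<lambda>f. b \<in> orbit f a"])
      (simp add: vrel_iff_orbit[OF random_virtual_perm_virtual_perm[OF rvp] I])
  then show ?thesis
    unfolding indicator_def mem_Collect_eq by (rule measurable_compose) simp
qed

lemma borel_measurable_class_fraction:
  assumes rvp: "random_virtual_perm M E \<sigma>" and I: "finite I" "I \<subseteq> E" "a \<in> I"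
  shows "(\<lambda>\<omega>. class_fraction E (\<sigma> \<omega>) I a) \<in> borel_measurable M"
proof -
  have "(\<lambda>\<omega>. card (I \<inter> vclass E (\<sigma> \<omega>) a)) \<in> measurable M (count_space UNIV)"
    by (rule random_virtual_perm_measurable[OF rvp I(1,2), where h = "\<lambda>f. card (orbit f a)"])
      (simp add: vclass_Int_eq_orbit[OF random_virtual_perm_virtual_perm[OF rvp] I])
  then show ?thesis
    unfolding class_fraction_def by (rule measurable_compose) simp
qed

lemma borel_measurable_index_fraction:
  assumes rvp: "random_virtual_perm M E \<sigma>" and I: "finite I" "I \<subseteq> E" "a \<in> I"
  shows "(\<lambda>\<omega>. index_fraction E (\<sigma> \<omega>) I a b) \<in> borel_measurable M"
proof -
  have "(\<lambda>\<omega>. kI E (\<sigma> \<omega>) I a b) \<in> measurable M (count_space UNIV)"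
    unfolding kI_def
    by (rule random_virtual_perm_measurable[OF rvp I(1,2),
          where h = "\<lambda>f. THE k. k < card (orbit f a) \<and> (f ^^ k) a = b"])
      (simp add: vclass_Int_eq_orbit[OF random_virtual_perm_virtual_perm[OF rvp] I])
  then show ?thesis
    unfolding index_fraction_def by (rule measurable_compose) simp
qed

definition class_fraction_error ::
    "'a set \<Rightarrow> ('w \<Rightarrow> 'a set \<Rightarrow> 'a \<Rightarrow> 'a) \<Rightarrow> ('w \<Rightarrow> real) \<Rightarrow> 'a \<Rightarrow> 'a set \<Rightarrow> 'w \<Rightarrow> real" where
  "class_fraction_error E \<sigma> L a I = (\<lambda>\<omega>. \<bar>class_fraction E (\<sigma> \<omega>) I a - L \<omega>\<bar>)"

definition index_fraction_error ::
    "'a set \<Rightarrow> ('w \<Rightarrow> 'a set \<Rightarrow> 'a \<Rightarrow> 'a) \<Rightarrow> ('w \<Rightarrow> real) \<Rightarrow> 'a \<Rightarrow> 'a \<Rightarrow> 'a set \<Rightarrow> 'w \<Rightarrow> real" where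
  "index_fraction_error E \<sigma> D a b I = (\<lambda>\<omega>. indicator {\<omega>. vrel E (\<sigma> \<omega>) a b} \<omega> *
    \<bar>index_fraction E (\<sigma> \<omega>) I a b - D \<omega>\<bar>)"

lemma eventually_borel_measurable_class_fraction_error:
  assumes "random_virtual_perm M E \<sigma>" "a \<in> F" "L \<in> borel_measurable M"
  shows "eventually (\<lambda>I. class_fraction_error E \<sigma> L a I \<in> borel_measurable M) (large_finite_subsets E F)"
  unfolding eventually_large_finite_subsets class_fraction_error_def
  by (intro exI[of _ 0] allI impI borel_measurable_abs borel_measurable_diff
      borel_measurable_class_fraction[OF assms(1)] assms(3)) (use assms(2) in auto)

lemma eventually_borel_measurable_index_fraction_error:
  assumes "random_virtual_perm M E \<sigma>" "a \<in> F" "b \<in> F" "D \<in> borel_measurable M"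
  shows "eventually (\<lambda>I. index_fraction_error E \<sigma> D a b I \<in> borel_measurable M)
    (large_finite_subsets E F)"
proof -
  have "index_fraction_error E \<sigma> D a b I \<in> borel_measurable M"
    if "finite I" "F \<subseteq> I" "I \<subseteq> E" for I
    using that assms unfolding index_fraction_error_def
    by (intro borel_measurable_times borel_measurable_abs borel_measurable_diff
        borel_measurable_indicator_vrel[OF assms(1) that(1,3)]
        borel_measurable_index_fraction[OF assms(1) that(1,3)]) auto
  then show ?thesis
    unfolding eventually_large_finite_subsets by blast
qed

lemma class_fraction_error_nonneg: "0 \<le> class_fraction_error E \<sigma> L a I \<omega>"
  unfolding class_fraction_error_def by simp

lemma index_fraction_error_nonneg: "0 \<le> index_fraction_error E \<sigma> D a b I \<omega>"
  unfolding index_fraction_error_def by simp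

lemma tendsto_class_fraction_error_iff:
  "(\<lambda>k. class_fraction_error E \<sigma> L a (Is k) \<omega>) \<longlonglongrightarrow> 0 \<longleftrightarrow>
    (\<lambda>k. class_fraction E (\<sigma> \<omega>) (Is k) a) \<longlonglongrightarrow> L \<omega>"
  unfolding class_fraction_error_def by (simp add: tendsto_rabs_zero_iff LIM_zero_iff)

lemma tendsto_index_fraction_error_iff:
  "vrel E (\<sigma> \<omega>) a b \<Longrightarrow> (\<lambda>k. index_fraction_error E \<sigma> D a b (Is k) \<omega>) \<longlonglongrightarrow> 0 \<longleftrightarrow>
    (\<lambda>k. index_fraction E (\<sigma> \<omega>) (Is k) a b) \<longlonglongrightarrow> D \<omega>"
  unfolding index_fraction_error_def by (simp add: tendsto_rabs_zero_iff LIM_zero_iff)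

lemma is_lambda_eventually_small:
  assumes "is_lambda M E \<sigma> a L" "0 < \<epsilon>"
  shows "eventually (\<lambda>I. (\<integral>\<^sup>+\<omega>. ennreal (class_fraction_error E \<sigma> L a I \<omega>) \<partial>M) < ennreal \<epsilon>)
    (large_finite_subsets E F)"
proof -
  have "\<forall>\<epsilon>>0. \<exists>N. \<forall>I. finite I \<and> I \<subseteq> E \<and> card I \<ge> N \<longrightarrow>
      (\<integral>\<^sup>+\<omega>. ennreal (class_fraction_error E \<sigma> L a I \<omega>) \<partial>M) < ennreal \<epsilon>"
    using assms(1) unfolding is_lambda_def class_fraction_error_def class_fraction_def
    by (rule conjunct2)
  then obtain N where "\<forall>I. finite I \<and> I \<subseteq> E \<and> card I \<ge> N \<longrightarrow>
      (\<integral>\<^sup>+\<omega>. ennreal (class_fraction_error E \<sigma> L a I \<omega>) \<partial>M) < ennreal \<epsilon>"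
    using assms(2) by blast
  then show ?thesis
    unfolding eventually_large_finite_subsets by (intro exI[of _ N]) auto
qed

lemma is_Delta_eventually_small:
  assumes "is_Delta M E \<sigma> a b D" "a \<in> F" "b \<in> F" "0 < \<epsilon>"
  shows "eventually (\<lambda>I. (\<integral>\<^sup>+\<omega>. ennreal (index_fraction_error E \<sigma> D a b I \<omega>) \<partial>M) < ennreal \<epsilon>)
    (large_finite_subsets E F)"
proof -
  have "\<forall>\<epsilon>>0. \<exists>N. \<forall>I. finite I \<and> I \<subseteq> E \<and> a \<in> I \<and> b \<in> I \<and> card I \<ge> N \<longrightarrow>
      (\<integral>\<^sup>+\<omega>. ennreal (index_fraction_error E \<sigma> D a b I \<omega>) \<partial>M) < ennreal \<epsilon>"
    using assms(1) unfolding is_Delta_def index_fraction_error_def index_fraction_def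
    by (rule conjunct2)
  then obtain N where "\<forall>I. finite I \<and> I \<subseteq> E \<and> a \<in> I \<and> b \<in> I \<and> card I \<ge> N \<longrightarrow>
      (\<integral>\<^sup>+\<omega>. ennreal (index_fraction_error E \<sigma> D a b I \<omega>) \<partial>M) < ennreal \<epsilon>"
    using assms(4) by blast
  then show ?thesis
    unfolding eventually_large_finite_subsets by (intro exI[of _ N]) (use assms(2,3) in auto)
qed

lemma random_virtual_perm_AE_limits:
  assumes rvp: "random_virtual_perm M E \<sigma>" and E: "infinite E" and X: "finite X" "X \<subseteq> E"
    and lam: "\<And>a. a \<in> X \<Longrightarrow> is_lambda M E \<sigma> a (L a)"
    and Delta: "\<And>a b. a \<in> X \<Longrightarrow> b \<in> X \<Longrightarrow> is_Delta M E \<sigma> a b (D a b)"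
  obtains Is where "\<And>k. finite (Is k) \<and> X \<subseteq> Is k \<and> Is k \<subseteq> E"
    and "AE \<omega> in M. \<forall>a\<in>X. (\<lambda>k. class_fraction E (\<sigma> \<omega>) (Is k) a) \<longlonglongrightarrow> L a \<omega> \<and>
      (\<forall>b\<in>X. vrel E (\<sigma> \<omega>) a b \<longrightarrow> (\<lambda>k. index_fraction E (\<sigma> \<omega>) (Is k) a b) \<longlonglongrightarrow> D a b \<omega>)"
proof -
  define G where "G = (\<lambda>a. class_fraction_error E \<sigma> (L a) a) ` X \<union>
    (\<lambda>(a, b). index_fraction_error E \<sigma> (D a b) a b) ` (X \<times> X)"
  have lam_mem: "class_fraction_error E \<sigma> (L a) a \<in> G" if "a \<in> X" for a
    using that unfolding G_def by blast
  have Delta_mem: "index_fraction_error E \<sigma> (D a b) a b \<in> G" if "a \<in> X" "b \<in> X" for a b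
    using that unfolding G_def by force
  have G_cases: "(\<And>a. a \<in> X \<Longrightarrow> g = class_fraction_error E \<sigma> (L a) a \<Longrightarrow> P) \<Longrightarrow>
      (\<And>a b. a \<in> X \<Longrightarrow> b \<in> X \<Longrightarrow> g = index_fraction_error E \<sigma> (D a b) a b \<Longrightarrow> P) \<Longrightarrow> P"
    if "g \<in> G" for g P
    using that unfolding G_def by auto
  have subsets: "eventually (\<lambda>I. finite I \<and> X \<subseteq> I \<and> I \<subseteq> E) (large_finite_subsets E X)"
    unfolding eventually_large_finite_subsets by blast
  have meas: "eventually (\<lambda>I. g I \<in> borel_measurable M) (large_finite_subsets E X)"
    if "g \<in> G" for g
    using that
  proof (elim G_cases)
    fix a assume a: "a \<in> X" and g: "g = class_fraction_error E \<sigma> (L a) a"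
    show ?thesis
      unfolding g using lam[OF a] a unfolding is_lambda_def
      by (intro eventually_borel_measurable_class_fraction_error[OF rvp]) auto
  next
    fix a b assume a: "a \<in> X" and b: "b \<in> X" and g: "g = index_fraction_error E \<sigma> (D a b) a b"
    show ?thesis
      unfolding g using Delta[OF a b] a b unfolding is_Delta_def
      by (intro eventually_borel_measurable_index_fraction_error[OF rvp]) auto
  qed
  have mean: "eventually (\<lambda>I. (\<integral>\<^sup>+\<omega>. ennreal (g I \<omega>) \<partial>M) < ennreal \<epsilon>) (large_finite_subsets E X)"
    if "g \<in> G" "0 < \<epsilon>" for g \<epsilon>
    using that(1) by (elim G_cases) (simp_all add: is_lambda_eventually_small[OF lam that(2)]
        is_Delta_eventually_small[OF Delta _ _ that(2)])
  have nonneg: "0 \<le> g I \<omega>" if "g \<in> G" for g I \<omega>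
    using that by (elim G_cases) (simp_all add: class_fraction_error_nonneg index_fraction_error_nonneg)
  have "finite G"
    unfolding G_def using X by simp
  obtain Is where Is: "\<And>k. finite (Is k) \<and> X \<subseteq> Is k \<and> Is k \<subseteq> E"
    and conv: "AE \<omega> in M. \<forall>g\<in>G. (\<lambda>k. g (Is k) \<omega>) \<longlonglongrightarrow> 0"
    by (rule AE_tendsto_zero_along_sequence[where M = M and G = G
          and P = "\<lambda>I. finite I \<and> X \<subseteq> I \<and> I \<subseteq> E", OF large_finite_subsets_neq_bot[OF E X] _ subsets])
      (simp_all add: \<open>finite G\<close> meas nonneg mean, blast)
  from conv have "AE \<omega> in M. \<forall>a\<in>X. (\<lambda>k. class_fraction E (\<sigma> \<omega>) (Is k) a) \<longlonglongrightarrow> L a \<omega> \<and>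
      (\<forall>b\<in>X. vrel E (\<sigma> \<omega>) a b \<longrightarrow> (\<lambda>k. index_fraction E (\<sigma> \<omega>) (Is k) a b) \<longlonglongrightarrow> D a b \<omega>)"
  proof eventually_elim
    case (elim \<omega>)
    have "(\<lambda>k. class_fraction E (\<sigma> \<omega>) (Is k) a) \<longlonglongrightarrow> L a \<omega>" if "a \<in> X" for a
      using bspec[OF elim lam_mem[OF that]] by (simp add: tendsto_class_fraction_error_iff)
    moreover have "(\<lambda>k. index_fraction E (\<sigma> \<omega>) (Is k) a b) \<longlonglongrightarrow> D a b \<omega>"
      if "a \<in> X" "b \<in> X" "vrel E (\<sigma> \<omega>) a b" for a b
      using bspec[OF elim Delta_mem[OF that(1,2)]]
      by (simp add: tendsto_index_fraction_error_iff[where \<sigma> = \<sigma> and \<omega> = \<omega>, OF that(3)])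
    ultimately show ?case
      by blast
  qed
  then show thesis
    by (rule that[OF Is])
qed

theorem proposition3p11:
  fixes M :: "'w measure" and E :: "'a set"
    and \<sigma> :: "'w \<Rightarrow> 'a set \<Rightarrow> 'a \<Rightarrow> 'a"
    and lam :: "'a \<Rightarrow> 'w \<Rightarrow> real" and Delta :: "'a \<Rightarrow> 'a \<Rightarrow> 'w \<Rightarrow> real"
    and x y z :: 'a
  assumes "prob_space M"
    and "countable E" and "infinite E"
    and "x \<in> E" and "y \<in> E" and "z \<in> E"
    and "random_virtual_perm M E \<sigma>"
    and "central_law M E \<sigma>"
    and "\<And>a. a \<in> E \<Longrightarrow> is_lambda M E \<sigma> a (lam a)"
    and "\<And>a b. a \<in> E \<Longrightarrow> b \<in> E \<Longrightarrow> is_Delta M E \<sigma> a b (Delta a b)"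
  shows "AE \<omega> in M. vrel E (\<sigma> \<omega>) x y \<and> vrel E (\<sigma> \<omega>) y z \<longrightarrow>
           cong_real (lam x \<omega>) (Delta x x \<omega>) 0 \<and>
           cong_real (lam x \<omega>) (Delta x y \<omega>) (- Delta y x \<omega>) \<and>
           cong_real (lam x \<omega>) (Delta x y \<omega> + Delta y z \<omega>) (Delta x z \<omega>)"
proof -
  let ?X = "{x, y, z}"
  have X: "finite ?X" "?X \<subseteq> E"
    using assms(4-6) by auto
  obtain Is where Is: "\<And>k. finite (Is k) \<and> ?X \<subseteq> Is k \<and> Is k \<subseteq> E"
    and lim: "AE \<omega> in M. \<forall>a\<in>?X. (\<lambda>k. class_fraction E (\<sigma> \<omega>) (Is k) a) \<longlonglongrightarrow> lam a \<omega> \<and>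
      (\<forall>b\<in>?X. vrel E (\<sigma> \<omega>) a b \<longrightarrow> (\<lambda>k. index_fraction E (\<sigma> \<omega>) (Is k) a b) \<longlonglongrightarrow> Delta a b \<omega>)"
  proof (rule random_virtual_perm_AE_limits[OF assms(7,3) X, where L = lam and D = Delta])
    show "is_lambda M E \<sigma> a (lam a)" if "a \<in> ?X" for a
      using that X by (intro assms(9)) auto
    show "is_Delta M E \<sigma> a b (Delta a b)" if "a \<in> ?X" "b \<in> ?X" for a b
      using that X by (intro assms(10)) auto
  qed (rule that)
  show ?thesis
    using lim AE_space
  proof eventually_elim
    case (elim \<omega>)
    show ?case
    proof (intro impI virtual_perm_Delta_cocycle[where Is = Is and l = "lam x \<omega>"
          and D = "\<lambda>a b. Delta a b \<omega>"])
      show "virtual_perm E (\<sigma> \<omega>)"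
        using random_virtual_perm_virtual_perm[OF assms(7)] elim by blast
    qed (use Is elim in auto)
  qed
qed

end
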